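(* Let $T>0$, let $(\pi_n)$ be a sequence of regular partitions of $[0,T]$ ($t^n_k=kT/N_n$, $(N_n)$ strictly increasing), and let $X=\{X(t)\colon t\in[0,T]\}$ be a second order process satisfying (C1) for some $\gamma\in(0,1)$. Assume there exist $\varphi\in\Psi$ and a continuous bounded function $g_0\colon(0,T)\to\mathbb R$ such that $$\lim_{h\to0+}\sup_{\varphi(h)\le t\le T-h}\Big|\frac{\mathbb{E}(X_{t+h}-2X_t+X_{t-h})^2}{h^{2\gamma}}-g_0(t)\Big|=0.$$ Then $\mathbb{E}V^{(2)}_{N_n}(X,2)\to\int_0^Tg_0(t)\,dt$ as $n\to\infty$, where $V^{(2)}_{N_n}(X,2)=(T^{-1}N_n)^{2\gamma-1}\sum_{k=1}^{N_n-1}\big(X(t^n_{k+1})-2X(t^n_k)+X(t^n_{k-1})\big)^2$.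
   Context: $\sigma_X^2(s,t)=\mathbb{E}[X(t)-X(s)]^2$. (C1): $\sigma_X(0,\delta)=O(\delta^\gamma)$ as $\delta\downarrow0$. $\Psi$ is the class of continuous $\varphi\colon(0,T]\to[0,\infty)$ with $\varphi(h)\to0$, $L(h):=\varphi(h)/h\to\infty$, $hL(h)^3\to0$ as $h\downarrow0$. *)

theory Defs
  imports "HOL-Probability.Probability" "HOL-Library.Landau_Symbols"
begin

definition second_order_process :: "'a measure \<Rightarrow> real \<Rightarrow> (real \<Rightarrow> 'a \<Rightarrow> real) \<Rightarrow> bool" where
  "second_order_process M T X \<longleftrightarrow>
     (\<forall>t\<in>{0..T}. X t \<in> borel_measurable M \<and> integrable M (\<lambda>\<omega>. (X t \<omega>)\<^sup>2))"

definition sigma_X :: "'a measure \<Rightarrow> (real \<Rightarrow> 'a \<Rightarrow> real) \<Rightarrow> real \<Rightarrow> real \<Rightarrow> real" where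
  "sigma_X M X s t = sqrt (\<integral>\<omega>. (X t \<omega> - X s \<omega>)\<^sup>2 \<partial>M)"

definition cond_C1 :: "'a measure \<Rightarrow> (real \<Rightarrow> 'a \<Rightarrow> real) \<Rightarrow> real \<Rightarrow> bool" where
  "cond_C1 M X \<gamma> \<longleftrightarrow> (\<lambda>\<delta>. sigma_X M X 0 \<delta>) \<in> O[at_right 0](\<lambda>\<delta>. \<delta> powr \<gamma>)"

definition Psi :: "real \<Rightarrow> (real \<Rightarrow> real) set" where
  "Psi T = {\<phi>. continuous_on {0<..T} \<phi> \<and> (\<forall>h\<in>{0<..T}. 0 \<le> \<phi> h)
      \<and> (\<phi> \<longlongrightarrow> 0) (at_right 0)
      \<and> filterlim (\<lambda>h. \<phi> h / h) at_top (at_right 0)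
      \<and> ((\<lambda>h. h * (\<phi> h / h) ^ 3) \<longlongrightarrow> 0) (at_right 0)}"

definition V2 :: "real \<Rightarrow> real \<Rightarrow> nat \<Rightarrow> (real \<Rightarrow> 'a \<Rightarrow> real) \<Rightarrow> 'a \<Rightarrow> real" where
  "V2 \<gamma> T N X \<omega> = (real N / T) powr (2 * \<gamma> - 1) *
     (\<Sum>k = 1..N - 1. (X (real (k + 1) * T / real N) \<omega> - 2 * X (real k * T / real N) \<omega>
                        + X (real (k - 1) * T / real N) \<omega>)\<^sup>2)"

end

theory Submission
  imports Defs
begin

(*
  With h = T/N, the expectation of V2 is the sum over the interior grid points kh of
  h * E(X(kh+h) - 2X(kh) + X(kh-h))^2 / h^(2 gamma).  It is compared with the Riemann sum of g0,
  which tends to the integral of g0 (dominated convergence for the associated step functions).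
  For kh >= phi(h) the uniform convergence hypothesis makes each normalized term eps-close to
  g0(kh).  The at most phi(h)/h remaining points lie near 0, where (C1) bounds the second moment
  by a multiple of (kh + h)^(2 gamma), hence the normalized term by a multiple of (phi(h)/h)^2;
  their total contribution is O(h (phi(h)/h)^3 + phi(h)), which vanishes by the definition of Psi.
*)

section \<open>Riemann sums on a regular grid\<close>

definition riemann_step :: "(real \<Rightarrow> real) \<Rightarrow> real \<Rightarrow> nat \<Rightarrow> real \<Rightarrow> real" where
  "riemann_step g T N x = (\<Sum>k=1..N-1. g (real k * (T / real N)) *
      indicator {real k * (T / real N)..<real (Suc k) * (T / real N)} x)"

lemma has_integral_indicator_atLeastLessThan:
  fixes a b :: real
  assumes "{a..<b} \<subseteq> S" "a \<le> b"
  shows "(indicator {a..<b} has_integral (b - a)) S"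
proof -
  have ab: "{a..<b} \<inter> S = {a..<b}" "{a..<b} \<in> lmeasurable"
    using assms(1) by (auto intro: bounded_set_imp_lmeasurable)
  then have "integral S (indicator {a..<b}) = b - a"
    using assms(2) by (simp add: integral_indicator)
  moreover have "indicat_real {a..<b} integrable_on S"
    using ab by (simp add: integrable_on_indicator)
  ultimately show ?thesis by (simp add: has_integral_integrable_integral)
qed

lemma riemann_step_cell_subset:
  assumes "T > 0" "k \<in> {1..N-1}"
  shows "{real k * (T / real N)..<real (Suc k) * (T / real N)} \<subseteq> {0<..<T}"
proof -
  have N: "real N > 0" using assms(2) by auto
  have "real (Suc k) * T \<le> real N * T"
    using assms by (intro mult_right_mono) auto
  then have "real (Suc k) * (T / real N) \<le> T" using N by (simp add: field_simps)
  moreover have "0 < real k * (T / real N)" using assms N by auto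
  ultimately show ?thesis by auto
qed

lemma has_integral_riemann_step:
  assumes "T > 0"
  shows "(riemann_step g T N has_integral (\<Sum>k=1..N-1. T / real N * g (real k * (T / real N)))) {0<..<T}"
  unfolding riemann_step_def
proof (intro has_integral_sum[OF finite_atLeastAtMost])
  fix k assume k: "k \<in> {1..N-1}"
  have "(indicator {real k * (T / real N)..<real (Suc k) * (T / real N)} has_integral
      real (Suc k) * (T / real N) - real k * (T / real N)) {0<..<T}"
    using assms by (intro has_integral_indicator_atLeastLessThan riemann_step_cell_subset k
        mult_right_mono) auto
  moreover have "real (Suc k) * (T / real N) - real k * (T / real N) = T / real N"
    by (simp add: algebra_simps add_divide_distrib)
  ultimately have "(indicator {real k * (T / real N)..<real (Suc k) * (T / real N)} has_integral
      T / real N) {0<..<T}"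
    by simp
  from has_integral_mult_right[OF this, of "g (real k * (T / real N))"]
  show "((\<lambda>x. g (real k * (T / real N)) * indicator {real k * (T / real N)..<real (Suc k) * (T / real N)} x)
      has_integral T / real N * g (real k * (T / real N))) {0<..<T}"
    by (simp add: algebra_simps)
qed

lemma riemann_step_eq:
  assumes "T > 0" "N > 0" "x \<ge> 0"
  shows "riemann_step g T N x =
    (if nat \<lfloor>x * real N / T\<rfloor> \<in> {1..N-1} then g (real (nat \<lfloor>x * real N / T\<rfloor>) * (T / real N)) else 0)"
proof -
  have cell: "indicat_real {real k * (T / real N)..<real (Suc k) * (T / real N)} x
      = (if k = nat \<lfloor>x * real N / T\<rfloor> then 1 else 0)" for k
  proof -
    have "0 \<le> \<lfloor>x * real N / T\<rfloor>" using assms by simp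
    have "x \<in> {real k * (T / real N)..<real (Suc k) * (T / real N)} \<longleftrightarrow>
        real k \<le> x * real N / T \<and> x * real N / T < real k + 1"
      using assms by (auto simp: field_simps)
    also have "\<dots> \<longleftrightarrow> \<lfloor>x * real N / T\<rfloor> = int k"
      by (simp add: floor_eq_iff)
    also have "\<dots> \<longleftrightarrow> k = nat \<lfloor>x * real N / T\<rfloor>"
      using \<open>0 \<le> \<lfloor>x * real N / T\<rfloor>\<close> by auto
    finally show ?thesis by (simp add: indicator_def)
  qed
  show ?thesis
    unfolding riemann_step_def cell by (simp add: if_distrib[of "(*) _"] cong: if_cong)
qed

lemma riemann_step_abs_le:
  assumes "T > 0" "0 \<le> B" "\<And>t. t \<in> {0<..<T} \<Longrightarrow> \<bar>g t\<bar> \<le> B" "x \<in> {0<..<T}"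
  shows "\<bar>riemann_step g T N x\<bar> \<le> B"
proof (cases "N = 0")
  case False
  let ?m = "nat \<lfloor>x * real N / T\<rfloor>"
  have "real ?m * (T / real N) \<in> {real ?m * (T / real N)..<real (Suc ?m) * (T / real N)}"
    using assms(1) False by (simp add: field_simps)
  then have "real ?m * (T / real N) \<in> {0<..<T}" if "?m \<in> {1..N-1}"
    using riemann_step_cell_subset[OF assms(1) that] by blast
  moreover have "riemann_step g T N x = (if ?m \<in> {1..N-1} then g (real ?m * (T / real N)) else 0)"
    using riemann_step_eq[OF assms(1)] False assms(4) by simp
  ultimately show ?thesis
    using assms(2,3) by simp
qed (simp add: riemann_step_def assms(2))

lemma floor_grid_point:
  assumes "0 < x" "x < T" "T / x < real N"
  shows "nat \<lfloor>x * real N / T\<rfloor> \<in> {1..N-1}"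
    and "x - T / real N < real (nat \<lfloor>x * real N / T\<rfloor>) * (T / real N)"
    and "real (nat \<lfloor>x * real N / T\<rfloor>) * (T / real N) \<le> x"
proof -
  define m where "m = nat \<lfloor>x * real N / T\<rfloor>"
  have "0 < T / x" using assms(1,2) by simp
  then have N: "real N > 0" using assms(3) by linarith
  then have gt1: "1 < x * real N / T" using assms by (simp add: field_simps)
  have ltN: "x * real N / T < real N" using assms(1,2) N by (simp add: field_simps)
  have "real m = of_int \<lfloor>x * real N / T\<rfloor>"
    using gt1 by (simp add: m_def)
  then have fl: "x * real N / T - 1 < real m" "real m \<le> x * real N / T"
    by linarith+
  then have "0 < real m" "real m < real N"
    using gt1 ltN by linarith+
  then have range: "m \<in> {1..N-1}" by auto
  have "x * real N - T < real m * T" "real m * T \<le> x * real N"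
    using fl assms(1,2) by (simp_all add: field_simps)
  then have "(x * real N - T) / real N < real m * T / real N" "real m * T / real N \<le> x"
    using N by (simp_all add: divide_strict_right_mono pos_divide_le_eq)
  then have approx: "x - T / real N < real m * (T / real N)" "real m * (T / real N) \<le> x"
    using N by (simp_all add: diff_divide_distrib)
  from range approx show "nat \<lfloor>x * real N / T\<rfloor> \<in> {1..N-1}"
    and "x - T / real N < real (nat \<lfloor>x * real N / T\<rfloor>) * (T / real N)"
    and "real (nat \<lfloor>x * real N / T\<rfloor>) * (T / real N) \<le> x"
    by (simp_all only: m_def)
qed

lemma riemann_step_tendsto:
  assumes "T > 0" "x \<in> {0<..<T}" "isCont g x"
  shows "(\<lambda>N. riemann_step g T N x) \<longlonglongrightarrow> g x"
proof -
  define y where "y N = real (nat \<lfloor>x * real N / T\<rfloor>) * (T / real N)" for N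
  have ev: "eventually (\<lambda>N. riemann_step g T N x = g (y N) \<and> x - T / real N < y N \<and> y N \<le> x) sequentially"
    using eventually_gt_at_top[of "nat \<lceil>T / x\<rceil>"]
  proof eventually_elim
    case (elim N)
    then have "T / x < real N" by linarith
    with assms(2) have "N > 0" "x - T / real N < y N" "y N \<le> x" "nat \<lfloor>x * real N / T\<rfloor> \<in> {1..N-1}"
      using floor_grid_point[of x T N] unfolding y_def by auto
    then show ?case
      using riemann_step_eq[OF assms(1)] assms(2) unfolding y_def by simp
  qed
  have "(\<lambda>N. T / real N) \<longlonglongrightarrow> 0"
    by (intro tendsto_divide_0[OF tendsto_const] filterlim_real_sequentially
        filterlim_at_top_imp_at_infinity)
  then have "(\<lambda>N. x - T / real N) \<longlonglongrightarrow> x"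
    using tendsto_diff[OF tendsto_const] by fastforce
  then have "y \<longlonglongrightarrow> x"
    by (rule tendsto_sandwich[rotated 2, OF _ tendsto_const])
      (use ev in \<open>auto elim: eventually_mono\<close>)
  then have "(\<lambda>N. g (y N)) \<longlonglongrightarrow> g x"
    using assms(3) isCont_tendsto_compose by blast
  then show ?thesis
    by (rule Lim_transform_eventually) (use ev in \<open>auto elim: eventually_mono\<close>)
qed

lemma riemann_sum_tendsto_integral:
  fixes g :: "real \<Rightarrow> real"
  assumes "T > 0" "continuous_on {0<..<T} g" "bounded (g ` {0<..<T})"
  shows "(\<lambda>N. \<Sum>k=1..N-1. T / real N * g (real k * (T / real N))) \<longlonglongrightarrow> integral {0..T} g"
proof -
  obtain B where B: "\<And>t. t \<in> {0<..<T} \<Longrightarrow> \<bar>g t\<bar> \<le> B"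
    using assms(3) unfolding bounded_iff by (auto simp del: greaterThanLessThan_iff)
  have "0 \<le> B" using B[of "T/2"] assms(1) by auto
  have "(\<lambda>N. integral {0<..<T} (riemann_step g T N)) \<longlonglongrightarrow> integral {0<..<T} g"
  proof (rule dominated_convergence(2))
    show "riemann_step g T N integrable_on {0<..<T}" for N
      using has_integral_riemann_step[OF assms(1)] by blast
    show "(\<lambda>_. B) integrable_on {0<..<T}"
      unfolding integrable_on_open_interval_real by (rule integrable_const_ivl)
    show "norm (riemann_step g T N x) \<le> B" if "x \<in> {0<..<T}" for N x
      using riemann_step_abs_le[OF assms(1) \<open>0 \<le> B\<close> B that] by simp
    show "(\<lambda>N. riemann_step g T N x) \<longlonglongrightarrow> g x" if "x \<in> {0<..<T}" for x
      using riemann_step_tendsto[OF assms(1) that] assms(2) that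
      by (simp add: continuous_on_eq_continuous_at)
  qed
  then show ?thesis
    using has_integral_riemann_step[OF assms(1), THEN integral_unique]
    by (simp add: integral_open_interval_real)
qed

section \<open>Second differences of a second order process\<close>

lemma power2_sum3_le: "((u::real) + v + w)\<^sup>2 \<le> 3 * (u\<^sup>2 + v\<^sup>2 + w\<^sup>2)"
proof -
  have "0 \<le> (u - v)\<^sup>2 + (v - w)\<^sup>2 + (u - w)\<^sup>2" by simp
  then show ?thesis by (simp add: power2_eq_square algebra_simps)
qed

lemma integrable_power2_add:
  fixes f g :: "'a \<Rightarrow> real"
  assumes "f \<in> borel_measurable M" "g \<in> borel_measurable M"
    and "integrable M (\<lambda>\<omega>. (f \<omega>)\<^sup>2)" "integrable M (\<lambda>\<omega>. (g \<omega>)\<^sup>2)"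
  shows "integrable M (\<lambda>\<omega>. (f \<omega> + g \<omega>)\<^sup>2)"
proof (rule Bochner_Integration.integrable_bound)
  show "integrable M (\<lambda>\<omega>. 2 * ((f \<omega>)\<^sup>2 + (g \<omega>)\<^sup>2))" using assms by auto
  show "(\<lambda>\<omega>. (f \<omega> + g \<omega>)\<^sup>2) \<in> borel_measurable M" using assms by auto
  have "(u + v)\<^sup>2 \<le> 2 * (u\<^sup>2 + v\<^sup>2)" for u v :: real
  proof -
    have "0 \<le> (u - v)\<^sup>2" by simp
    then show ?thesis by (simp add: power2_eq_square algebra_simps)
  qed
  then show "AE \<omega> in M. norm ((f \<omega> + g \<omega>)\<^sup>2) \<le> norm (2 * ((f \<omega>)\<^sup>2 + (g \<omega>)\<^sup>2))"
    by simp
qed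

lemma
  fixes f g k :: "'a \<Rightarrow> real"
  assumes meas: "f \<in> borel_measurable M" "g \<in> borel_measurable M" "k \<in> borel_measurable M"
    and sq: "integrable M (\<lambda>\<omega>. (f \<omega>)\<^sup>2)" "integrable M (\<lambda>\<omega>. (g \<omega>)\<^sup>2)" "integrable M (\<lambda>\<omega>. (k \<omega>)\<^sup>2)"
  shows integrable_power2_second_difference: "integrable M (\<lambda>\<omega>. (f \<omega> - 2 * g \<omega> + k \<omega>)\<^sup>2)"
    and integral_power2_second_difference_le: "(\<integral>\<omega>. (f \<omega> - 2 * g \<omega> + k \<omega>)\<^sup>2 \<partial>M) \<le>
      3 * ((\<integral>\<omega>. (f \<omega>)\<^sup>2 \<partial>M) + 4 * (\<integral>\<omega>. (g \<omega>)\<^sup>2 \<partial>M) + (\<integral>\<omega>. (k \<omega>)\<^sup>2 \<partial>M))"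
proof -
  have g2: "(\<lambda>\<omega>. -2 * g \<omega>) \<in> borel_measurable M" "integrable M (\<lambda>\<omega>. (-2 * g \<omega>)\<^sup>2)"
    using meas(2) sq(2) by (simp_all add: power_mult_distrib)
  have "integrable M (\<lambda>\<omega>. (f \<omega> + -2 * g \<omega>)\<^sup>2)"
    by (rule integrable_power2_add[OF meas(1) g2(1) sq(1) g2(2)])
  moreover have "(\<lambda>\<omega>. f \<omega> + -2 * g \<omega>) \<in> borel_measurable M"
    using meas(1) g2(1) by (rule borel_measurable_add)
  ultimately have "integrable M (\<lambda>\<omega>. (f \<omega> + -2 * g \<omega> + k \<omega>)\<^sup>2)"
    using integrable_power2_add[OF _ meas(3) _ sq(3)] by blast
  then show integrable: "integrable M (\<lambda>\<omega>. (f \<omega> - 2 * g \<omega> + k \<omega>)\<^sup>2)"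
    by simp
  have "(\<integral>\<omega>. (f \<omega> - 2 * g \<omega> + k \<omega>)\<^sup>2 \<partial>M) \<le> (\<integral>\<omega>. 3 * ((f \<omega>)\<^sup>2 + 4 * (g \<omega>)\<^sup>2 + (k \<omega>)\<^sup>2) \<partial>M)"
    using integrable sq power2_sum3_le[of "f _" "-2 * g _" "k _"]
    by (intro integral_mono) (simp_all add: power_mult_distrib)
  also have "\<dots> = 3 * ((\<integral>\<omega>. (f \<omega>)\<^sup>2 \<partial>M) + 4 * (\<integral>\<omega>. (g \<omega>)\<^sup>2 \<partial>M) + (\<integral>\<omega>. (k \<omega>)\<^sup>2 \<partial>M))"
    using sq by simp
  finally show "(\<integral>\<omega>. (f \<omega> - 2 * g \<omega> + k \<omega>)\<^sup>2 \<partial>M) \<le>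
      3 * ((\<integral>\<omega>. (f \<omega>)\<^sup>2 \<partial>M) + 4 * (\<integral>\<omega>. (g \<omega>)\<^sup>2 \<partial>M) + (\<integral>\<omega>. (k \<omega>)\<^sup>2 \<partial>M))" .
qed

lemma
  assumes X: "second_order_process M T X" and abc: "a \<in> {0..T}" "b \<in> {0..T}" "c \<in> {0..T}"
  shows integrable_second_difference: "integrable M (\<lambda>\<omega>. (X a \<omega> - 2 * X b \<omega> + X c \<omega>)\<^sup>2)"
    and integral_second_difference_le_increments:
      "(\<integral>\<omega>. (X a \<omega> - 2 * X b \<omega> + X c \<omega>)\<^sup>2 \<partial>M) \<le>
        3 * ((\<integral>\<omega>. (X a \<omega> - X 0 \<omega>)\<^sup>2 \<partial>M) + 4 * (\<integral>\<omega>. (X b \<omega> - X 0 \<omega>)\<^sup>2 \<partial>M)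
          + (\<integral>\<omega>. (X c \<omega> - X 0 \<omega>)\<^sup>2 \<partial>M))"
proof -
  have meas: "X s \<in> borel_measurable M" and sq: "integrable M (\<lambda>\<omega>. (X s \<omega>)\<^sup>2)"
    if "s \<in> {0..T}" for s
    using X that unfolding second_order_process_def by auto
  have "0 \<in> {0..T}" using abc by auto
  have incr: "(\<lambda>\<omega>. X s \<omega> - X 0 \<omega>) \<in> borel_measurable M" "integrable M (\<lambda>\<omega>. (X s \<omega> - X 0 \<omega>)\<^sup>2)"
    if "s \<in> {0..T}" for s
    using integrable_power2_add[of "X s" M "\<lambda>\<omega>. - X 0 \<omega>"] meas[OF that] sq[OF that]
      meas[OF \<open>0 \<in> {0..T}\<close>] sq[OF \<open>0 \<in> {0..T}\<close>]
    by simp_all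
  have second_difference: "(\<lambda>\<omega>. (X a \<omega> - 2 * X b \<omega> + X c \<omega>)\<^sup>2) =
      (\<lambda>\<omega>. ((X a \<omega> - X 0 \<omega>) - 2 * (X b \<omega> - X 0 \<omega>) + (X c \<omega> - X 0 \<omega>))\<^sup>2)"
    by (simp add: algebra_simps)
  show "integrable M (\<lambda>\<omega>. (X a \<omega> - 2 * X b \<omega> + X c \<omega>)\<^sup>2)"
    unfolding second_difference using incr abc by (intro integrable_power2_second_difference)
  show "(\<integral>\<omega>. (X a \<omega> - 2 * X b \<omega> + X c \<omega>)\<^sup>2 \<partial>M) \<le>
        3 * ((\<integral>\<omega>. (X a \<omega> - X 0 \<omega>)\<^sup>2 \<partial>M) + 4 * (\<integral>\<omega>. (X b \<omega> - X 0 \<omega>)\<^sup>2 \<partial>M)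
          + (\<integral>\<omega>. (X c \<omega> - X 0 \<omega>)\<^sup>2 \<partial>M))"
    unfolding second_difference using incr abc by (intro integral_power2_second_difference_le)
qed

lemma cond_C1_increment_moment_bound:
  assumes "cond_C1 M X \<gamma>"
  obtains K \<delta> where "0 \<le> K" "0 < \<delta>"
    "\<And>s. 0 \<le> s \<Longrightarrow> s < \<delta> \<Longrightarrow> (\<integral>\<omega>. (X s \<omega> - X 0 \<omega>)\<^sup>2 \<partial>M) \<le> K * s powr (2 * \<gamma>)"
proof -
  obtain C where C: "C > 0"
    "eventually (\<lambda>s. norm (sigma_X M X 0 s) \<le> C * norm (s powr \<gamma>)) (at_right 0)"
    using assms unfolding cond_C1_def by (elim landau_o.bigE)
  then obtain \<delta> where \<delta>: "\<delta> > 0"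
    "\<And>s. 0 < s \<Longrightarrow> s < \<delta> \<Longrightarrow> norm (sigma_X M X 0 s) \<le> C * norm (s powr \<gamma>)"
    unfolding eventually_at_right_field by auto
  have "(\<integral>\<omega>. (X s \<omega> - X 0 \<omega>)\<^sup>2 \<partial>M) \<le> C\<^sup>2 * s powr (2 * \<gamma>)" if s: "0 \<le> s" "s < \<delta>" for s
  proof (cases "s = 0")
    case False
    define Q where "Q = (\<integral>\<omega>. (X s \<omega> - X 0 \<omega>)\<^sup>2 \<partial>M)"
    have "0 \<le> Q" unfolding Q_def by simp
    have "sqrt Q \<le> C * s powr \<gamma>"
      using \<delta>(2)[of s] s False by (simp add: sigma_X_def Q_def)
    then have "(sqrt Q)\<^sup>2 \<le> (C * s powr \<gamma>)\<^sup>2"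
      using \<open>0 \<le> Q\<close> by (intro power_mono) auto
    also have "(C * s powr \<gamma>)\<^sup>2 = C\<^sup>2 * s powr (2 * \<gamma>)"
      using s False by (simp add: power_mult_distrib power2_eq_square powr_add[symmetric])
    finally show ?thesis using \<open>0 \<le> Q\<close> by (simp add: Q_def)
  qed simp
  then show ?thesis using that[of "C\<^sup>2" \<delta>] \<delta>(1) by simp
qed

definition second_difference_moment :: "'a measure \<Rightarrow> (real \<Rightarrow> 'a \<Rightarrow> real) \<Rightarrow> real \<Rightarrow> real \<Rightarrow> real"
  where "second_difference_moment M X t h = (\<integral>\<omega>. (X (t + h) \<omega> - 2 * X t \<omega> + X (t - h) \<omega>)\<^sup>2 \<partial>M)"

lemma second_difference_moment_nonneg: "0 \<le> second_difference_moment M X t h"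
  by (simp add: second_difference_moment_def)

lemma second_difference_moment_le_powr:
  assumes X: "second_order_process M T X" and "0 \<le> \<gamma>" "0 \<le> K"
    and K: "\<And>s. 0 \<le> s \<Longrightarrow> s < \<delta> \<Longrightarrow> (\<integral>\<omega>. (X s \<omega> - X 0 \<omega>)\<^sup>2 \<partial>M) \<le> K * s powr (2 * \<gamma>)"
    and th: "0 < h" "h \<le> t" "t + h \<le> T" "t + h < \<delta>"
  shows "second_difference_moment M X t h \<le> 18 * K * (t + h) powr (2 * \<gamma>)"
proof -
  have incr: "(\<integral>\<omega>. (X s \<omega> - X 0 \<omega>)\<^sup>2 \<partial>M) \<le> K * (t + h) powr (2 * \<gamma>)"
    if "0 \<le> s" "s \<le> t + h" for s
  proof -
    have "(\<integral>\<omega>. (X s \<omega> - X 0 \<omega>)\<^sup>2 \<partial>M) \<le> K * s powr (2 * \<gamma>)"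
      using K that th by simp
    also have "\<dots> \<le> K * (t + h) powr (2 * \<gamma>)"
      using that assms(2,3) by (intro mult_left_mono powr_mono2) auto
    finally show ?thesis .
  qed
  have "second_difference_moment M X t h \<le>
      3 * ((\<integral>\<omega>. (X (t + h) \<omega> - X 0 \<omega>)\<^sup>2 \<partial>M) + 4 * (\<integral>\<omega>. (X t \<omega> - X 0 \<omega>)\<^sup>2 \<partial>M)
        + (\<integral>\<omega>. (X (t - h) \<omega> - X 0 \<omega>)\<^sup>2 \<partial>M))"
    unfolding second_difference_moment_def using th
    by (intro integral_second_difference_le_increments[OF X]) auto
  also have "\<dots> \<le> 3 * (K * (t + h) powr (2 * \<gamma>) + 4 * (K * (t + h) powr (2 * \<gamma>))
        + K * (t + h) powr (2 * \<gamma>))"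
    using th by (intro mult_left_mono add_mono incr) auto
  finally show ?thesis by simp
qed

lemma grid_interior_bounds:
  assumes "0 < h" "real N * h = T" "k \<in> {1..N-1}"
  shows "h \<le> real k * h" "real k * h + h \<le> T"
proof -
  have "(real k + 1) * h \<le> real N * h"
    using assms by (intro mult_right_mono) auto
  then show "real k * h + h \<le> T" using assms(2) by (simp add: algebra_simps)
  show "h \<le> real k * h" using assms(1,3) by simp
qed

lemma V2_eq:
  assumes "0 < T" "0 < h" "real N * h = T"
  shows "V2 \<gamma> T N X \<omega> = h / h powr (2 * \<gamma>) *
    (\<Sum>k=1..N-1. (X (real k * h + h) \<omega> - 2 * X (real k * h) \<omega> + X (real k * h - h) \<omega>)\<^sup>2)"
proof -
  have "real N > 0" using assms by (cases "N = 0") auto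
  then have mesh: "T / real N = h" using assms by (simp add: field_simps)
  have "real N / T = 1 / h"
    using assms by (simp add: field_simps)
  then have "(real N / T) powr (2 * \<gamma> - 1) = (1 / h) powr (2 * \<gamma> - 1)"
    by simp
  also have "\<dots> = h / h powr (2 * \<gamma>)"
    using assms(2) by (simp add: powr_divide powr_diff)
  finally have scale: "(real N / T) powr (2 * \<gamma> - 1) = h / h powr (2 * \<gamma>)" .
  show ?thesis
    unfolding V2_def scale
  proof (intro arg_cong2[where f="(*)"] refl sum.cong)
    fix k assume "k \<in> {1..N-1}"
    then have shift: "real (k + 1) * h = real k * h + h" "real (k - 1) * h = real k * h - h"
      by (simp_all add: of_nat_diff algebra_simps)
    have grid: "real j * T / real N = real j * h" for j
      using mesh by (metis times_divide_eq_right)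
    show "(X (real (k + 1) * T / real N) \<omega> - 2 * X (real k * T / real N) \<omega>
        + X (real (k - 1) * T / real N) \<omega>)\<^sup>2
        = (X (real k * h + h) \<omega> - 2 * X (real k * h) \<omega> + X (real k * h - h) \<omega>)\<^sup>2"
      by (simp only: grid shift)
  qed
qed

lemma integral_V2_eq:
  assumes X: "second_order_process M T X" and h: "0 < T" "0 < h" "real N * h = T"
  shows "(\<integral>\<omega>. V2 \<gamma> T N X \<omega> \<partial>M) =
    (\<Sum>k=1..N-1. h * (second_difference_moment M X (real k * h) h / h powr (2 * \<gamma>)))"
proof -
  have grid: "real k * h + h \<in> {0..T}" "real k * h \<in> {0..T}" "real k * h - h \<in> {0..T}"
    if "k \<in> {1..N-1}" for k
    using grid_interior_bounds[OF h(2,3) that] h(2) by auto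
  have "(\<integral>\<omega>. V2 \<gamma> T N X \<omega> \<partial>M) = h / h powr (2 * \<gamma>) * (\<Sum>k=1..N-1.
      (\<integral>\<omega>. (X (real k * h + h) \<omega> - 2 * X (real k * h) \<omega> + X (real k * h - h) \<omega>)\<^sup>2 \<partial>M))"
    unfolding V2_eq[OF h] integral_mult_right_zero
    by (subst Bochner_Integration.integral_sum) (auto intro!: integrable_second_difference[OF X] grid)
  then show ?thesis
    unfolding sum_distrib_left by (simp add: second_difference_moment_def field_simps)
qed

section \<open>The normalized second moments along the grid\<close>

lemma powr_shifted_ratio_le:
  fixes h t L a :: real
  assumes "0 < h" "0 \<le> t" "t \<le> h * L" "1 \<le> L" "0 \<le> a" "a \<le> 2"
  shows "(t + h) powr a / h powr a \<le> 4 * L\<^sup>2"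
proof -
  have "h \<le> h * L" using assms by simp
  then have "t + h \<le> 2 * L * h"
    using assms(3) by (simp add: algebra_simps)
  then have "(t + h) / h \<le> 2 * L"
    using assms(1) by (simp add: pos_divide_le_eq)
  have "(t + h) powr a / h powr a = ((t + h) / h) powr a"
    using assms by (simp add: powr_divide)
  also have "\<dots> \<le> (2 * L) powr a"
    using assms \<open>(t + h) / h \<le> 2 * L\<close> by (intro powr_mono2) auto
  also have "\<dots> \<le> (2 * L) powr 2"
    using assms by (intro powr_mono) auto
  also have "\<dots> = 4 * L\<^sup>2"
    using assms by (simp add: powr_numeral power_mult_distrib)
  finally show ?thesis .
qed

lemma card_nat_less_le:
  assumes "0 \<le> L" "0 \<notin> A"
  shows "real (card {k\<in>A. real k < L}) \<le> L"
proof -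
  have "{k\<in>A. real k < L} \<subseteq> {1..nat \<lfloor>L\<rfloor>}"
  proof
    fix k assume "k \<in> {k\<in>A. real k < L}"
    then have "1 \<le> k" "real k < L" using assms(2) by (cases k; auto)+
    then show "k \<in> {1..nat \<lfloor>L\<rfloor>}" by simp linarith
  qed
  then have "card {k\<in>A. real k < L} \<le> nat \<lfloor>L\<rfloor>"
    using card_mono[of "{1..nat \<lfloor>L\<rfloor>}"] by simp
  then show ?thesis using assms by linarith
qed

lemma abs_sum_le_split:
  fixes a :: "'i \<Rightarrow> real"
  assumes "finite I" "\<And>k. k \<in> I \<Longrightarrow> \<bar>a k\<bar> \<le> e + (if P k then c else 0)"
  shows "\<bar>\<Sum>k\<in>I. a k\<bar> \<le> real (card I) * e + real (card {k\<in>I. P k}) * c"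
proof -
  have "\<bar>\<Sum>k\<in>I. a k\<bar> \<le> (\<Sum>k\<in>I. \<bar>a k\<bar>)" by (rule sum_abs)
  also have "\<dots> \<le> (\<Sum>k\<in>I. e + (if P k then c else 0))" by (intro sum_mono assms(2))
  also have "\<dots> = real (card I) * e + real (card {k\<in>I. P k}) * c"
    using assms(1) by (simp add: sum.distrib sum.inter_filter[symmetric])
  finally show ?thesis .
qed

lemma normalized_second_moment_error_le:
  fixes d y p :: real
  assumes h: "0 < h" "h \<le> t" "h \<le> p" and \<gamma>: "0 \<le> \<gamma>" "\<gamma> \<le> 1"
    and "0 \<le> C" "0 \<le> \<epsilon>" "0 \<le> d" "\<bar>y\<bar> \<le> B"
    and small_t: "t < p \<Longrightarrow> d \<le> C * (t + h) powr (2 * \<gamma>)"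
    and large_t: "p \<le> t \<Longrightarrow> \<bar>d / h powr (2 * \<gamma>) - y\<bar> \<le> \<epsilon>"
  shows "\<bar>d / h powr (2 * \<gamma>) - y\<bar> \<le> \<epsilon> + (if t < p then 4 * C * (p / h)\<^sup>2 + B else 0)"
proof (cases "t < p")
  case True
  have "1 \<le> p / h" "t \<le> h * (p / h)"
    using h True by simp_all
  then have "(t + h) powr (2 * \<gamma>) / h powr (2 * \<gamma>) \<le> 4 * (p / h)\<^sup>2"
    using h \<gamma> by (intro powr_shifted_ratio_le) auto
  then have "C * ((t + h) powr (2 * \<gamma>) / h powr (2 * \<gamma>)) \<le> C * (4 * (p / h)\<^sup>2)"
    using \<open>0 \<le> C\<close> by (rule mult_left_mono)
  moreover have "d / h powr (2 * \<gamma>) \<le> C * ((t + h) powr (2 * \<gamma>) / h powr (2 * \<gamma>))"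
    using small_t[OF True] h(1) by (simp add: divide_right_mono)
  ultimately have "\<bar>d / h powr (2 * \<gamma>)\<bar> \<le> 4 * C * (p / h)\<^sup>2"
    using \<open>0 \<le> d\<close> by simp
  then show ?thesis
    using True \<open>0 \<le> \<epsilon>\<close> \<open>\<bar>y\<bar> \<le> B\<close> abs_triangle_ineq4[of "d / h powr (2 * \<gamma>)" y] by simp
next
  case False
  then show ?thesis using large_t by simp
qed

lemma second_moment_riemann_error_le:
  fixes D :: "real \<Rightarrow> real \<Rightarrow> real" and g \<phi> :: "real \<Rightarrow> real"
  assumes h: "0 < h" and NhT: "real N * h = T"
    and \<gamma>: "0 \<le> \<gamma>" "\<gamma> \<le> 1" and "0 \<le> C" "0 \<le> B" "0 \<le> \<epsilon>"
    and h_le_\<phi>: "h \<le> \<phi> h" and \<phi>_\<delta>: "\<phi> h + h < \<delta>"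
    and D_nonneg: "\<And>t. 0 \<le> D t h"
    and D_le: "\<And>t. h \<le> t \<Longrightarrow> t + h \<le> T \<Longrightarrow> t + h < \<delta> \<Longrightarrow> D t h \<le> C * (t + h) powr (2 * \<gamma>)"
    and g_le: "\<And>t. t \<in> {0<..<T} \<Longrightarrow> \<bar>g t\<bar> \<le> B"
    and unif: "\<And>t. \<phi> h \<le> t \<Longrightarrow> t \<le> T - h \<Longrightarrow> \<bar>D t h / h powr (2 * \<gamma>) - g t\<bar> \<le> \<epsilon>"
  shows "\<bar>\<Sum>k=1..N-1. h * (D (real k * h) h / h powr (2 * \<gamma>) - g (real k * h))\<bar>
    \<le> T * \<epsilon> + 4 * C * (h * (\<phi> h / h) ^ 3) + B * \<phi> h"
proof -
  define L where "L = \<phi> h / h"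
  have \<phi>L: "\<phi> h = h * L" and "1 \<le> L"
    using h h_le_\<phi> by (simp_all add: L_def field_simps)
  define c where "c = h * (4 * C * L\<^sup>2 + B)"
  have term_le: "\<bar>h * (D (real k * h) h / h powr (2 * \<gamma>) - g (real k * h))\<bar>
      \<le> h * \<epsilon> + (if real k * h < \<phi> h then c else 0)" if "k \<in> {1..N-1}" for k
  proof -
    define t where "t = real k * h"
    have "h \<le> t" "t + h \<le> T"
      using grid_interior_bounds[OF h NhT that] by (simp_all add: t_def)
    have "\<bar>g t\<bar> \<le> B"
      using g_le h \<open>h \<le> t\<close> \<open>t + h \<le> T\<close> by simp
    moreover have "D t h \<le> C * (t + h) powr (2 * \<gamma>)" if "t < \<phi> h"
      using D_le \<open>h \<le> t\<close> \<open>t + h \<le> T\<close> that \<phi>_\<delta> by simp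
    moreover have "\<bar>D t h / h powr (2 * \<gamma>) - g t\<bar> \<le> \<epsilon>" if "\<phi> h \<le> t"
      using unif that \<open>t + h \<le> T\<close> by simp
    ultimately have "\<bar>D t h / h powr (2 * \<gamma>) - g t\<bar> \<le> \<epsilon> + (if t < \<phi> h then 4 * C * L\<^sup>2 + B else 0)"
      unfolding L_def
      by (rule normalized_second_moment_error_le[OF h \<open>h \<le> t\<close> h_le_\<phi> \<gamma> \<open>0 \<le> C\<close> \<open>0 \<le> \<epsilon>\<close> D_nonneg])
    then have "\<bar>h * (D t h / h powr (2 * \<gamma>) - g t)\<bar>
        \<le> h * (\<epsilon> + (if t < \<phi> h then 4 * C * L\<^sup>2 + B else 0))"
      using h by (simp add: abs_mult mult_left_mono)
    also have "\<dots> = h * \<epsilon> + (if t < \<phi> h then c else 0)"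
      by (simp add: c_def distrib_left)
    finally show ?thesis unfolding t_def .
  qed
  have "{k \<in> {1..N-1}. real k * h < \<phi> h} = {k \<in> {1..N-1}. real k < L}"
    using h \<phi>L by auto
  then have card_le: "real (card {k \<in> {1..N-1}. real k * h < \<phi> h}) \<le> L"
    using card_nat_less_le[of L "{1..N-1}"] \<open>1 \<le> L\<close> by simp
  have "\<bar>\<Sum>k=1..N-1. h * (D (real k * h) h / h powr (2 * \<gamma>) - g (real k * h))\<bar>
      \<le> real (card {1..N-1}) * (h * \<epsilon>) + real (card {k \<in> {1..N-1}. real k * h < \<phi> h}) * c"
    by (rule abs_sum_le_split[OF finite_atLeastAtMost term_le])
  also have "\<dots> \<le> real N * (h * \<epsilon>) + L * c"
    using card_le h \<open>0 \<le> \<epsilon>\<close> \<open>0 \<le> C\<close> \<open>0 \<le> B\<close>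
    by (intro add_mono mult_right_mono) (auto simp: c_def)
  also have "\<dots> = T * \<epsilon> + 4 * C * (h * (\<phi> h / h) ^ 3) + B * \<phi> h"
    using NhT h by (simp add: c_def \<phi>L power2_eq_square power3_eq_cube algebra_simps)
  finally show ?thesis .
qed

lemma Psi_eventually_small:
  assumes "\<phi> \<in> Psi T" "0 < \<delta>" "0 < \<epsilon>"
  shows "eventually (\<lambda>h. 0 < h \<and> h \<le> \<phi> h \<and> \<phi> h + h < \<delta> \<and> B * \<phi> h < \<epsilon>
    \<and> C * (h * (\<phi> h / h) ^ 3) < \<epsilon>) (at_right 0)"
proof -
  from assms(1) have \<phi>_tendsto: "(\<phi> \<longlongrightarrow> 0) (at_right 0)"
    and \<phi>_over_h: "filterlim (\<lambda>h. \<phi> h / h) at_top (at_right 0)"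
    and \<phi>_cube: "((\<lambda>h. h * (\<phi> h / h) ^ 3) \<longlongrightarrow> 0) (at_right 0)"
    unfolding Psi_def by auto
  have "eventually (\<lambda>h. 0 < h) (at_right (0::real))"
    by (rule eventually_at_right_less)
  moreover have "eventually (\<lambda>h. 1 \<le> \<phi> h / h) (at_right 0)"
    using \<phi>_over_h unfolding filterlim_at_top by blast
  moreover have "((\<lambda>h. \<phi> h + h) \<longlongrightarrow> 0 + 0) (at_right 0)"
    by (intro tendsto_add \<phi>_tendsto tendsto_ident_at)
  then have "eventually (\<lambda>h. \<phi> h + h < \<delta>) (at_right 0)"
    using assms(2) by (auto dest: order_tendstoD(2))
  moreover have "((\<lambda>h. B * \<phi> h) \<longlongrightarrow> B * 0) (at_right 0)"
    by (intro tendsto_mult tendsto_const \<phi>_tendsto)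
  then have "eventually (\<lambda>h. B * \<phi> h < \<epsilon>) (at_right 0)"
    using assms(3) by (auto dest: order_tendstoD(2))
  moreover have "((\<lambda>h. C * (h * (\<phi> h / h) ^ 3)) \<longlongrightarrow> C * 0) (at_right 0)"
    by (intro tendsto_mult tendsto_const \<phi>_cube)
  then have "eventually (\<lambda>h. C * (h * (\<phi> h / h) ^ 3) < \<epsilon>) (at_right 0)"
    using assms(3) by (auto dest: order_tendstoD(2))
  ultimately show ?thesis
    by eventually_elim (auto simp: pos_le_divide_eq)
qed

lemma second_moment_riemann_error_eventually_le:
  fixes D :: "real \<Rightarrow> real \<Rightarrow> real" and g \<phi> :: "real \<Rightarrow> real"
  assumes "0 \<le> \<gamma>" "\<gamma> \<le> 1" "0 \<le> C" "0 \<le> B" "\<phi> \<in> Psi T" "0 < \<delta>" "0 < \<epsilon>"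
    and D_nonneg: "\<And>t h. 0 \<le> D t h"
    and D_le: "\<And>t h. 0 < h \<Longrightarrow> h \<le> t \<Longrightarrow> t + h \<le> T \<Longrightarrow> t + h < \<delta> \<Longrightarrow>
      D t h \<le> C * (t + h) powr (2 * \<gamma>)"
    and g_le: "\<And>t. t \<in> {0<..<T} \<Longrightarrow> \<bar>g t\<bar> \<le> B"
    and unif: "eventually (\<lambda>h. \<forall>t. \<phi> h \<le> t \<and> t \<le> T - h \<longrightarrow>
      \<bar>D t h / h powr (2 * \<gamma>) - g t\<bar> \<le> \<epsilon>) (at_right 0)"
  shows "eventually (\<lambda>h. \<forall>N. real N * h = T \<longrightarrow>
    \<bar>\<Sum>k=1..N-1. h * (D (real k * h) h / h powr (2 * \<gamma>) - g (real k * h))\<bar> \<le> (T + 2) * \<epsilon>)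
    (at_right 0)"
  using unif Psi_eventually_small[OF assms(5,6,7), where B = B and C = "4 * C"]
proof eventually_elim
  case (elim h)
  then have unif_h: "\<bar>D t h / h powr (2 * \<gamma>) - g t\<bar> \<le> \<epsilon>" if "\<phi> h \<le> t" "t \<le> T - h" for t
    using that by blast
  show ?case
  proof (intro allI impI)
    fix N assume "real N * h = T"
    have "\<bar>\<Sum>k=1..N-1. h * (D (real k * h) h / h powr (2 * \<gamma>) - g (real k * h))\<bar>
        \<le> T * \<epsilon> + 4 * C * (h * (\<phi> h / h) ^ 3) + B * \<phi> h"
      using elim(2) \<open>0 < \<epsilon>\<close> by (intro second_moment_riemann_error_le[where \<phi> = \<phi> and D = D and g = g,
          OF _ \<open>real N * h = T\<close> assms(1-4) _ _ _ D_nonneg D_le g_le unif_h]) auto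
    also have "\<dots> \<le> (T + 2) * \<epsilon>"
      using elim(2) by (simp add: algebra_simps)
    finally show "\<bar>\<Sum>k=1..N-1. h * (D (real k * h) h / h powr (2 * \<gamma>) - g (real k * h))\<bar>
        \<le> (T + 2) * \<epsilon>" .
  qed
qed

lemma second_moment_riemann_error_tendsto_zero:
  fixes D :: "real \<Rightarrow> real \<Rightarrow> real" and g \<phi> :: "real \<Rightarrow> real"
  assumes "0 < T" "0 \<le> \<gamma>" "\<gamma> \<le> 1" "0 \<le> C" "0 \<le> B" "\<phi> \<in> Psi T" "0 < \<delta>"
    and D_nonneg: "\<And>t h. 0 \<le> D t h"
    and D_le: "\<And>t h. 0 < h \<Longrightarrow> h \<le> t \<Longrightarrow> t + h \<le> T \<Longrightarrow> t + h < \<delta> \<Longrightarrow>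
      D t h \<le> C * (t + h) powr (2 * \<gamma>)"
    and g_le: "\<And>t. t \<in> {0<..<T} \<Longrightarrow> \<bar>g t\<bar> \<le> B"
    and unif: "\<forall>\<epsilon>>0. eventually (\<lambda>h. \<forall>t. \<phi> h \<le> t \<and> t \<le> T - h \<longrightarrow>
      \<bar>D t h / h powr (2 * \<gamma>) - g t\<bar> \<le> \<epsilon>) (at_right 0)"
  shows "(\<lambda>N. \<Sum>k=1..N-1. T / real N * (D (real k * (T / real N)) (T / real N) / (T / real N) powr (2 * \<gamma>)
      - g (real k * (T / real N)))) \<longlonglongrightarrow> 0"
proof (rule tendstoI)
  fix e :: real assume "e > 0"
  define \<epsilon> where "\<epsilon> = e / (T + 3)"
  have "\<epsilon> > 0" "(T + 2) * \<epsilon> < e"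
    using \<open>e > 0\<close> \<open>0 < T\<close> by (auto simp: \<epsilon>_def field_simps)
  have mesh: "filterlim (\<lambda>N. T / real N) (at_right 0) sequentially"
  proof (rule tendsto_imp_filterlim_at_right)
    show "(\<lambda>N. T / real N) \<longlonglongrightarrow> 0"
      by (intro tendsto_divide_0[OF tendsto_const] filterlim_real_sequentially
          filterlim_at_top_imp_at_infinity)
    show "eventually (\<lambda>N. T / real N > 0) sequentially"
      using eventually_gt_at_top[of 0] by eventually_elim (simp add: \<open>0 < T\<close>)
  qed
  have "eventually (\<lambda>h. \<forall>t. \<phi> h \<le> t \<and> t \<le> T - h \<longrightarrow> \<bar>D t h / h powr (2 * \<gamma>) - g t\<bar> \<le> \<epsilon>)
      (at_right 0)"
    using unif \<open>\<epsilon> > 0\<close> by blast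
  from second_moment_riemann_error_eventually_le[OF assms(2-7) \<open>\<epsilon> > 0\<close> D_nonneg D_le g_le this]
  have "eventually (\<lambda>h. \<forall>N. real N * h = T \<longrightarrow>
      \<bar>\<Sum>k=1..N-1. h * (D (real k * h) h / h powr (2 * \<gamma>) - g (real k * h))\<bar> \<le> (T + 2) * \<epsilon>)
      (at_right 0)" .
  from filterlim_iff[THEN iffD1, OF mesh, rule_format, OF this]
  show "eventually (\<lambda>N. dist (\<Sum>k=1..N-1. T / real N * (D (real k * (T / real N)) (T / real N)
      / (T / real N) powr (2 * \<gamma>) - g (real k * (T / real N)))) 0 < e) sequentially"
    using eventually_gt_at_top[of 0]
  proof eventually_elim
    case (elim N)
    then have "real N * (T / real N) = T" by simp
    with elim(1) have "\<bar>\<Sum>k=1..N-1. T / real N * (D (real k * (T / real N)) (T / real N)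
        / (T / real N) powr (2 * \<gamma>) - g (real k * (T / real N)))\<bar> \<le> (T + 2) * \<epsilon>"
      by blast
    then show ?case using \<open>(T + 2) * \<epsilon> < e\<close> by (simp add: dist_real_def)
  qed
qed

lemma second_difference_riemann_error_tendsto_zero:
  assumes X: "second_order_process M T X" and "0 < T" "0 \<le> \<gamma>" "\<gamma> \<le> 1" "cond_C1 M X \<gamma>"
    and "\<phi> \<in> Psi T" and "bounded (g ` {0<..<T})"
    and unif: "\<forall>\<epsilon>>0. eventually (\<lambda>h. \<forall>t. \<phi> h \<le> t \<and> t \<le> T - h \<longrightarrow>
      \<bar>second_difference_moment M X t h / h powr (2 * \<gamma>) - g t\<bar> \<le> \<epsilon>) (at_right 0)"
  shows "(\<lambda>N. \<Sum>k=1..N-1. T / real N * (second_difference_moment M X (real k * (T / real N)) (T / real N)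
      / (T / real N) powr (2 * \<gamma>) - g (real k * (T / real N)))) \<longlonglongrightarrow> 0"
proof -
  obtain K \<delta> where "0 \<le> K" "0 < \<delta>" and K:
    "\<And>s. 0 \<le> s \<Longrightarrow> s < \<delta> \<Longrightarrow> (\<integral>\<omega>. (X s \<omega> - X 0 \<omega>)\<^sup>2 \<partial>M) \<le> K * s powr (2 * \<gamma>)"
    using cond_C1_increment_moment_bound[OF assms(5)] by blast
  obtain B where B: "\<And>t. t \<in> {0<..<T} \<Longrightarrow> \<bar>g t\<bar> \<le> B"
    using assms(7) unfolding bounded_iff by (auto simp del: greaterThanLessThan_iff)
  have "0 \<le> B" using B[of "T / 2"] assms(2) by auto
  show ?thesis
  proof (rule second_moment_riemann_error_tendsto_zero[where C = "18 * K" and B = B and \<delta> = \<delta>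
        and \<phi> = \<phi> and D = "second_difference_moment M X" and g = g])
    show "0 < T" "0 \<le> \<gamma>" "\<gamma> \<le> 1" "0 \<le> B" "\<phi> \<in> Psi T" "0 < \<delta>" by fact+
    show "0 \<le> 18 * K" using \<open>0 \<le> K\<close> by simp
    show "\<And>t h. 0 \<le> second_difference_moment M X t h"
      by (rule second_difference_moment_nonneg)
    show "\<And>t h. 0 < h \<Longrightarrow> h \<le> t \<Longrightarrow> t + h \<le> T \<Longrightarrow> t + h < \<delta> \<Longrightarrow>
        second_difference_moment M X t h \<le> 18 * K * (t + h) powr (2 * \<gamma>)"
      by (rule second_difference_moment_le_powr[OF X \<open>0 \<le> \<gamma>\<close> \<open>0 \<le> K\<close> K])
    show "\<And>t. t \<in> {0<..<T} \<Longrightarrow> \<bar>g t\<bar> \<le> B" by (fact B)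
    show "\<forall>\<epsilon>>0. eventually (\<lambda>h. \<forall>t. \<phi> h \<le> t \<and> t \<le> T - h \<longrightarrow>
        \<bar>second_difference_moment M X t h / h powr (2 * \<gamma>) - g t\<bar> \<le> \<epsilon>) (at_right 0)"
      by (fact unif)
  qed
qed

lemma integral_V2_tendsto_integral:
  assumes X: "second_order_process M T X" and "0 < T" "0 \<le> \<gamma>" "\<gamma> \<le> 1" "cond_C1 M X \<gamma>"
    and "\<phi> \<in> Psi T" and "continuous_on {0<..<T} g" "bounded (g ` {0<..<T})"
    and unif: "\<forall>\<epsilon>>0. eventually (\<lambda>h. \<forall>t. \<phi> h \<le> t \<and> t \<le> T - h \<longrightarrow>
      \<bar>second_difference_moment M X t h / h powr (2 * \<gamma>) - g t\<bar> \<le> \<epsilon>) (at_right 0)"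
  shows "(\<lambda>N. \<integral>\<omega>. V2 \<gamma> T N X \<omega> \<partial>M) \<longlonglongrightarrow> integral {0..T} g"
proof (rule Lim_transform_eventually)
  let ?S = "\<lambda>N. \<Sum>k=1..N-1. T / real N * g (real k * (T / real N))"
  let ?E = "\<lambda>N. \<Sum>k=1..N-1. T / real N * (second_difference_moment M X (real k * (T / real N)) (T / real N)
      / (T / real N) powr (2 * \<gamma>) - g (real k * (T / real N)))"
  show "(\<lambda>N. ?S N + ?E N) \<longlonglongrightarrow> integral {0..T} g"
    using tendsto_add[OF riemann_sum_tendsto_integral[OF assms(2,7,8)]
        second_difference_riemann_error_tendsto_zero[OF assms(1-6,8) unif]]
    by simp
  show "eventually (\<lambda>N. ?S N + ?E N = (\<integral>\<omega>. V2 \<gamma> T N X \<omega> \<partial>M)) sequentially"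
    using eventually_gt_at_top[of 0]
  proof eventually_elim
    case (elim N)
    then have mesh: "0 < T / real N" "real N * (T / real N) = T"
      using assms(2) by simp_all
    show ?case
      unfolding integral_V2_eq[OF X assms(2) mesh] sum.distrib[symmetric]
      by (rule sum.cong) (simp_all add: algebra_simps)
  qed
qed

theorem proposition2:
  fixes M :: "'a measure" and T \<gamma> :: real and N :: "nat \<Rightarrow> nat"
    and X :: "real \<Rightarrow> 'a \<Rightarrow> real" and \<phi> g0 :: "real \<Rightarrow> real"
  assumes "prob_space M"
    and "T > 0"
    and "strict_mono N" and "\<forall>n. N n \<ge> 1"
    and "second_order_process M T X"
    and "0 < \<gamma>" and "\<gamma> < 1"
    and "cond_C1 M X \<gamma>"
    and "\<phi> \<in> Psi T"
    and "continuous_on {0<..<T} g0" and "bounded (g0 ` {0<..<T})"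
    and "\<forall>\<epsilon>>0. eventually (\<lambda>h. \<forall>t. \<phi> h \<le> t \<and> t \<le> T - h \<longrightarrow>
            \<bar>(\<integral>\<omega>. (X (t + h) \<omega> - 2 * X t \<omega> + X (t - h) \<omega>)\<^sup>2 \<partial>M) / h powr (2 * \<gamma>) - g0 t\<bar> \<le> \<epsilon>)
          (at_right 0)"
  shows "(\<lambda>n. \<integral>\<omega>. V2 \<gamma> T (N n) X \<omega> \<partial>M) \<longlonglongrightarrow> integral {0..T} g0"
proof -
  have "(\<lambda>N. \<integral>\<omega>. V2 \<gamma> T N X \<omega> \<partial>M) \<longlonglongrightarrow> integral {0..T} g0"
  proof (rule integral_V2_tendsto_integral[OF assms(5,2)])
    show "0 \<le> \<gamma>" "\<gamma> \<le> 1" using assms(6,7) by simp_all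
    show "\<forall>\<epsilon>>0. eventually (\<lambda>h. \<forall>t. \<phi> h \<le> t \<and> t \<le> T - h \<longrightarrow>
        \<bar>second_difference_moment M X t h / h powr (2 * \<gamma>) - g0 t\<bar> \<le> \<epsilon>) (at_right 0)"
      unfolding second_difference_moment_def by (fact assms(12))
  qed (fact assms)+
  from LIMSEQ_subseq_LIMSEQ[OF this assms(3)] show ?thesis
    by (simp add: o_def)
qed

end
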